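(* Assume the feature groups $\boldsymbol X_{\mathcal X(1)},\dots,\boldsymbol X_{\mathcal X(M)}$ are mutually independent and $f(\boldsymbol X)=\sum_{m\in S_1}h_m(\boldsymbol X_{\mathcal X(m)})+\sum_{J\in S_2}h_J(\boldsymbol X_{\mathcal X(J)})$, where $S_1\subset\{1,\dots,M\}$, $S_2$ is a collection of two-element subsets of $\{1,\dots,M\}$, $\mathbb Eh_m(\boldsymbol X_{\mathcal X(m)})=0$ for $m\in S_1$, and $\mathbb E(h_J(\boldsymbol X_{\mathcal X(J)})\mid\boldsymbol X_{\mathcal X(l)})=0$ for every $J\in S_2$ and $l\in J$; set $h_J\equiv0$ for $J\notin\{\{m\}:m\in S_1\}\cup S_2$ and $h_m=h_{\{m\}}$. Let $K\ge1$ and let $J_1,\dots,J_{2K}$ be pairwise distinct subsets of $\{1,\dots,M\}$ with $\#J_l=1$ for $l\le K$ and $\#J_l=2$ for $K<l\le 2K$. Define $R_0\equiv0$ and $R_s(\boldsymbol X)=R_{s-1}(\boldsymbol X)+\mathbb E(f(\boldsymbol X)-R_{s-1}(\boldsymbol X)\mid\boldsymbol X_{\mathcal X(J_s)})$. Then for every $0<s\le 2K$, $$R_s(\boldsymbol X)=\sum_{l=1}^sh_{J_l}(\boldsymbol X_{\mathcal X(J_l)})+\sum_{m\in(\bigcup_{k=K+1}^sJ_k)\setminus(\bigcup_{k=1}^KJ_k)}h_m(\boldsymbol X_{\mathcal X(m)}),$$ where a sum over an empty index set is zero.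
   Context: $\boldsymbol X=(X_1,\dots,X_p)^\top$ is a random vector in $\{0,1\}^p$; $\{1,\dots,p\}$ is partitioned into disjoint nonempty feature groups $\mathcal X(1),\dots,\mathcal X(M)$; $\mathcal X(J)=\bigcup_{m\in J}\mathcal X(m)$ and $\boldsymbol X_{\mathcal X(J)}=(X_j)_{j\in\mathcal X(J)}$. The functions $h_J$ are real-valued measurable functions of $\boldsymbol X_{\mathcal X(J)}$. *)

theory Defs
  imports "HOL-Probability.Probability"
begin

text \<open>Features are indexed by 1..p; a realisation of X is a vector x :: nat \<Rightarrow> bool
  (True = 1, False = 0). The groups are G 1, ..., G M.\<close>

definition grp_union :: "(nat \<Rightarrow> nat set) \<Rightarrow> nat set \<Rightarrow> nat set" where
  "grp_union G J = (\<Union>m\<in>J. G m)"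

definition cond_exp_coords ::
  "(nat \<Rightarrow> bool) pmf \<Rightarrow> nat set \<Rightarrow> ((nat \<Rightarrow> bool) \<Rightarrow> real) \<Rightarrow> (nat \<Rightarrow> bool) \<Rightarrow> real" where
  "cond_exp_coords P A g x =
     measure_pmf.expectation (cond_pmf P {y. restrict y A = restrict x A}) g"

primrec Rseq ::
  "(nat \<Rightarrow> bool) pmf \<Rightarrow> (nat \<Rightarrow> nat set) \<Rightarrow> ((nat \<Rightarrow> bool) \<Rightarrow> real) \<Rightarrow> (nat \<Rightarrow> nat set)
    \<Rightarrow> nat \<Rightarrow> (nat \<Rightarrow> bool) \<Rightarrow> real" where
  "Rseq P G f Js 0 = (\<lambda>x. 0)"
| "Rseq P G f Js (Suc s) = (\<lambda>x. Rseq P G f Js s x +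
      cond_exp_coords P (grp_union G (Js (Suc s))) (\<lambda>y. f y - Rseq P G f Js s y) x)"

end

theory Submission
  imports Defs
begin

(*
  Write f as the sum of its components h_T(X_T) over all nonempty T \<subseteq> {1..M}, where h_T = 0
  outside the model. Independence of the blocks gives E(h_T | X_C) = h_T if T \<subseteq> C and 0 otherwise:
  a main effect or an interaction disjoint from C averages to its mean 0, and an interaction {a, b}
  with a \<in> C, b \<notin> C is conditionally equal to E(h_T | X_a) = 0. Consequently, if R_{s-1} is the
  sum of the components over a family V of blocks, then R_s is the sum over V together with all
  nonempty T \<subseteq> J_s. So R_s collects exactly the components supported in some J_l with l \<le> s, and
  these are the J_l themselves plus the singletons {m} with m in a pair J_l (K < l \<le> s) but in no
  singleton J_k.
*)

lemma finite_set_pmf_bounded_support: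
  fixes P :: "(nat \<Rightarrow> bool) pmf"
  assumes "set_pmf P \<subseteq> {x. \<forall>j. x j \<longrightarrow> j \<in> B}" and "finite B"
  shows "finite (set_pmf P)"
proof (rule finite_subset)
  show "set_pmf P \<subseteq> (\<lambda>X j. j \<in> X) ` Pow B"
  proof
    fix x assume "x \<in> set_pmf P"
    then have "{j. x j} \<in> Pow B" using assms(1) by auto
    moreover have "x = (\<lambda>j. j \<in> {j. x j})" by simp
    ultimately show "x \<in> (\<lambda>X j. j \<in> X) ` Pow B" by blast
  qed
qed (use assms(2) in simp)

lemma restrict_grp_union_eq_iff:
  "restrict y (grp_union G C) = restrict x (grp_union G C) \<longleftrightarrow>
     (\<forall>m\<in>C. restrict y (G m) = restrict x (G m))"
  unfolding grp_union_def restrict_def fun_eq_iff by auto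

lemma restrict_grp_union_eq_mono:
  "T \<subseteq> C \<Longrightarrow> restrict y (grp_union G C) = restrict x (grp_union G C) \<Longrightarrow>
     restrict y (grp_union G T) = restrict x (grp_union G T)"
  unfolding restrict_grp_union_eq_iff by blast

locale finite_pmf =
  fixes P :: "(nat \<Rightarrow> bool) pmf"
  assumes finite_support: "finite (set_pmf P)"
begin

lemma expectation_eq_sum: "measure_pmf.expectation P g = (\<Sum>y\<in>set_pmf P. g y * pmf P y)"
  by (rule integral_measure_pmf_real) (use finite_support in auto)

lemma measure_eq_sum: "measure P S = (\<Sum>y\<in>{y\<in>set_pmf P. y \<in> S}. pmf P y)"
proof -
  have "measure P S = measure P (S \<inter> set_pmf P)" by (simp add: measure_Int_set_pmf)
  also have "\<dots> = sum (pmf P) (S \<inter> set_pmf P)"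
    using finite_support by (intro measure_measure_pmf_finite) auto
  finally show ?thesis by (simp add: Int_def conj_commute)
qed

lemma cond_exp_coords_eq_sum:
  assumes "x \<in> set_pmf P"
  shows "cond_exp_coords P A g x =
    (\<Sum>y\<in>{y\<in>set_pmf P. restrict y A = restrict x A}. g y * pmf P y) /
      measure P {y. restrict y A = restrict x A}"
proof -
  let ?S = "{y. restrict y A = restrict x A}"
  have ne: "set_pmf P \<inter> ?S \<noteq> {}" using assms by auto
  have "cond_exp_coords P A g x = (\<Sum>y\<in>{y\<in>set_pmf P. y \<in> ?S}. g y * pmf (cond_pmf P ?S) y)"
    unfolding cond_exp_coords_def
    by (rule integral_measure_pmf_real) (use finite_support ne in auto)
  then show ?thesis by (simp add: pmf_cond[OF ne] sum_divide_distrib)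
qed

lemma cond_exp_coords_cong:
  assumes "x \<in> set_pmf P"
    and "\<And>y. y \<in> set_pmf P \<Longrightarrow> restrict y A = restrict x A \<Longrightarrow> g1 y = g2 y"
  shows "cond_exp_coords P A g1 x = cond_exp_coords P A g2 x"
  unfolding cond_exp_coords_eq_sum[OF assms(1)] using assms(2) by (intro arg_cong2[where f="(/)"] sum.cong) auto

lemma cond_exp_coords_const:
  assumes x: "x \<in> set_pmf P"
    and "\<And>y. y \<in> set_pmf P \<Longrightarrow> restrict y A = restrict x A \<Longrightarrow> g y = c"
  shows "cond_exp_coords P A g x = c"
proof -
  let ?S = "{y. restrict y A = restrict x A}"
  have "measure P ?S > 0" using x by (intro measure_pmf_posI) auto
  moreover have "cond_exp_coords P A g x = c * measure P ?S / measure P ?S"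
    unfolding cond_exp_coords_eq_sum[OF x] measure_eq_sum sum_distrib_left
    using assms(2) by (intro arg_cong2[where f="(/)"] sum.cong) auto
  ultimately show ?thesis by simp
qed

lemma cond_exp_coords_diff:
  "x \<in> set_pmf P \<Longrightarrow> cond_exp_coords P A (\<lambda>y. g1 y - g2 y) x =
     cond_exp_coords P A g1 x - cond_exp_coords P A g2 x"
  unfolding cond_exp_coords_eq_sum by (simp add: left_diff_distrib sum_subtractf diff_divide_distrib)

lemma cond_exp_coords_sum:
  "x \<in> set_pmf P \<Longrightarrow> cond_exp_coords P A (\<lambda>y. \<Sum>i\<in>I. g i y) x = (\<Sum>i\<in>I. cond_exp_coords P A (g i) x)"
  unfolding cond_exp_coords_eq_sum
  by (simp add: sum_distrib_right sum_divide_distrib[symmetric] sum.swap[of _ I])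

lemma cond_exp_coords_grp_union_subset:
  assumes "x \<in> set_pmf P" and "T \<subseteq> C"
  shows "cond_exp_coords P (grp_union G C) (\<lambda>y. \<phi> (restrict y (grp_union G T))) x =
    \<phi> (restrict x (grp_union G T))"
  using assms by (intro cond_exp_coords_const) (auto dest: restrict_grp_union_eq_mono)

lemma expectation_cond_exp_coords:
  "measure_pmf.expectation P (cond_exp_coords P A g) = measure_pmf.expectation P g"
proof -
  let ?Q = "\<lambda>x. cond_pmf P {y. restrict y A = restrict x A}"
  have "bind_pmf P ?Q = P"
    by (rule bind_cond_pmf_cancel) (auto intro: arg_cong[where f="measure P"])
  then have "measure_pmf.expectation P g = measure_pmf.expectation (bind_pmf P ?Q) g" by simp
  also have "\<dots> = (\<Sum>x\<in>set_pmf P. pmf P x *\<^sub>R measure_pmf.expectation (?Q x) g)"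
  proof (rule pmf_expectation_bind)
    show "finite (set_pmf (?Q x))" if "x \<in> set_pmf P" for x
      using that finite_support by (subst set_cond_pmf) auto
  qed (use finite_support in auto)
  also have "\<dots> = measure_pmf.expectation P (cond_exp_coords P A g)"
    by (simp add: expectation_eq_sum cond_exp_coords_def mult.commute)
  finally show ?thesis ..
qed

lemma sum_pmf_fiberwise:
  "(\<Sum>y\<in>{y\<in>set_pmf P. Q y}. \<psi> (\<pi> y) * pmf P y) =
     (\<Sum>b\<in>\<pi> ` set_pmf P. \<psi> b * measure P {y. Q y \<and> \<pi> y = b})"
proof -
  have "(\<Sum>y\<in>{y\<in>set_pmf P. Q y}. \<psi> (\<pi> y) * pmf P y) =
      (\<Sum>b\<in>\<pi> ` set_pmf P. \<Sum>y\<in>{y\<in>{y\<in>set_pmf P. Q y}. \<pi> y = b}. \<psi> (\<pi> y) * pmf P y)"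
    by (rule sum.group[symmetric]) (use finite_support in auto)
  also have "\<dots> = (\<Sum>b\<in>\<pi> ` set_pmf P. \<psi> b * measure P {y. Q y \<and> \<pi> y = b})"
    unfolding measure_eq_sum sum_distrib_left by (intro sum.cong refl) auto
  finally show ?thesis .
qed

end

locale independent_groups = finite_pmf +
  fixes G :: "nat \<Rightarrow> nat set" and M :: nat
  assumes indep: "prob_space.indep_vars (measure_pmf P) (\<lambda>m. count_space UNIV)
                    (\<lambda>m x. restrict x (G m)) {1..M}"
begin

lemma measure_blocks_eq_prod:
  assumes "J \<subseteq> {1..M}"
  shows "measure P {y. \<forall>m\<in>J. restrict y (G m) = v m} =
    (\<Prod>m\<in>J. measure P {y. restrict y (G m) = v m})"
proof (cases "J = {}")
  case False
  have "prob_space.indep_sets (measure_pmf P)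
      (\<lambda>m. {(\<lambda>x. restrict x (G m)) -` A \<inter> space (measure_pmf P) | A. A \<in> sets (count_space UNIV)}) {1..M}"
    using indep unfolding prob_space.indep_vars_def2[OF prob_space_measure_pmf] by blast
  then have "measure P (\<Inter>m\<in>J. (\<lambda>x. restrict x (G m)) -` {v m} \<inter> space (measure_pmf P)) =
      (\<Prod>m\<in>J. measure P ((\<lambda>x. restrict x (G m)) -` {v m} \<inter> space (measure_pmf P)))"
    by (rule prob_space.indep_setsD[OF prob_space_measure_pmf _ assms False])
      (use assms finite_subset[OF assms] in auto)
  moreover have "(\<Inter>m\<in>J. (\<lambda>x. restrict x (G m)) -` {v m} \<inter> space (measure_pmf P)) =
      {y. \<forall>m\<in>J. restrict y (G m) = v m}"
    using False by auto
  ultimately show ?thesis by (simp add: vimage_def)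
qed simp

lemma measure_grp_union_Int:
  assumes C: "C \<subseteq> {1..M}" and D: "D \<subseteq> {1..M}" and "C \<inter> D = {}"
  shows "measure P {y. restrict y (grp_union G C) = restrict x0 (grp_union G C) \<and>
                       restrict y (grp_union G D) = restrict x1 (grp_union G D)} =
    measure P {y. restrict y (grp_union G C) = restrict x0 (grp_union G C)} *
    measure P {y. restrict y (grp_union G D) = restrict x1 (grp_union G D)}"
proof -
  define v where "v m = (if m \<in> C then restrict x0 (G m) else restrict x1 (G m))" for m
  have "{y. restrict y (grp_union G C) = restrict x0 (grp_union G C) \<and>
            restrict y (grp_union G D) = restrict x1 (grp_union G D)} =
        {y. \<forall>m\<in>C \<union> D. restrict y (G m) = v m}"
    and "{y. restrict y (grp_union G C) = restrict x0 (grp_union G C)} =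
        {y. \<forall>m\<in>C. restrict y (G m) = v m}"
    and "{y. restrict y (grp_union G D) = restrict x1 (grp_union G D)} =
        {y. \<forall>m\<in>D. restrict y (G m) = v m}"
    using \<open>C \<inter> D = {}\<close> unfolding restrict_grp_union_eq_iff v_def by auto
  moreover have "finite C" "finite D"
    using finite_subset[OF C] finite_subset[OF D] by auto
  ultimately show ?thesis
    using assms by (simp add: measure_blocks_eq_prod prod.union_disjoint)
qed

lemma cond_exp_coords_indep:
  assumes x: "x \<in> set_pmf P" and C: "C \<subseteq> {1..M}" and D: "D \<subseteq> {1..M}" and "C \<inter> D = {}"
    and g: "\<And>y. restrict y (grp_union G C) = restrict x (grp_union G C) \<Longrightarrow>
              g y = \<psi> (restrict y (grp_union G D))"
  shows "cond_exp_coords P (grp_union G C) g x =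
    measure_pmf.expectation P (\<lambda>y. \<psi> (restrict y (grp_union G D)))"
proof -
  let ?S = "{y. restrict y (grp_union G C) = restrict x (grp_union G C)}"
  let ?\<pi> = "\<lambda>y. restrict y (grp_union G D)"
  have "cond_exp_coords P (grp_union G C) g x =
      (\<Sum>y\<in>{y\<in>set_pmf P. y \<in> ?S}. \<psi> (?\<pi> y) * pmf P y) / measure P ?S"
    unfolding cond_exp_coords_eq_sum[OF x] by (intro arg_cong2[where f="(/)"] sum.cong) (auto simp: g)
  also have "(\<Sum>y\<in>{y\<in>set_pmf P. y \<in> ?S}. \<psi> (?\<pi> y) * pmf P y) =
      (\<Sum>b\<in>?\<pi> ` set_pmf P. \<psi> b * measure P {y. y \<in> ?S \<and> ?\<pi> y = b})"
    by (rule sum_pmf_fiberwise)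
  also have "\<dots> = measure P ?S * (\<Sum>b\<in>?\<pi> ` set_pmf P. \<psi> b * measure P {y. True \<and> ?\<pi> y = b})"
    unfolding sum_distrib_left
    by (intro sum.cong refl) (auto simp: measure_grp_union_Int[OF C D \<open>C \<inter> D = {}\<close>])
  also have "(\<Sum>b\<in>?\<pi> ` set_pmf P. \<psi> b * measure P {y. True \<and> ?\<pi> y = b}) =
      measure_pmf.expectation P (\<lambda>y. \<psi> (?\<pi> y))"
    using sum_pmf_fiberwise[where Q="\<lambda>_. True", symmetric] by (simp add: expectation_eq_sum)
  also have "measure P ?S * measure_pmf.expectation P (\<lambda>y. \<psi> (?\<pi> y)) / measure P ?S =
      measure_pmf.expectation P (\<lambda>y. \<psi> (?\<pi> y))"
    using measure_pmf_posI[OF x, of ?S] by simp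
  finally show ?thesis .
qed

lemma cond_exp_coords_drop_indep_blocks:
  assumes x: "x \<in> set_pmf P" and "L \<subseteq> C" and C: "C \<subseteq> {1..M}" and D: "D \<subseteq> {1..M}"
    and "C \<inter> D = {}"
  shows "cond_exp_coords P (grp_union G C) (\<lambda>y. \<phi> (restrict y (grp_union G (L \<union> D)))) x =
    cond_exp_coords P (grp_union G L) (\<lambda>y. \<phi> (restrict y (grp_union G (L \<union> D)))) x"
proof -
  define \<psi> where "\<psi> b = \<phi> (restrict (\<lambda>i. if i \<in> grp_union G L then x i else b i) (grp_union G (L \<union> D)))"
    for b
  have freeze: "\<phi> (restrict y (grp_union G (L \<union> D))) = \<psi> (restrict y (grp_union G D))"
    if "restrict y (grp_union G L) = restrict x (grp_union G L)" for y
  proof -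
    have "restrict y (grp_union G (L \<union> D)) =
        restrict (\<lambda>i. if i \<in> grp_union G L then x i else restrict y (grp_union G D) i) (grp_union G (L \<union> D))"
      using that unfolding grp_union_def restrict_def fun_eq_iff by (auto split: if_splits)
    then show ?thesis unfolding \<psi>_def by simp
  qed
  have L: "L \<subseteq> {1..M}" using \<open>L \<subseteq> C\<close> C by blast
  have "cond_exp_coords P (grp_union G C) (\<lambda>y. \<phi> (restrict y (grp_union G (L \<union> D)))) x =
      measure_pmf.expectation P (\<lambda>y. \<psi> (restrict y (grp_union G D)))"
    by (rule cond_exp_coords_indep[OF x C D \<open>C \<inter> D = {}\<close>])
      (use freeze restrict_grp_union_eq_mono[OF \<open>L \<subseteq> C\<close>] in blast)
  also have "\<dots> = cond_exp_coords P (grp_union G L) (\<lambda>y. \<phi> (restrict y (grp_union G (L \<union> D)))) x"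
    using \<open>L \<subseteq> C\<close> \<open>C \<inter> D = {}\<close>
    by (intro cond_exp_coords_indep[OF x L D, symmetric]) (blast intro: freeze)+
  finally show ?thesis .
qed

end

lemma grp_union_singleton [simp]: "grp_union G {m} = G m"
  by (simp add: grp_union_def)

definition grp_component ::
  "(nat \<Rightarrow> nat set) \<Rightarrow> (nat set \<Rightarrow> (nat \<Rightarrow> bool) \<Rightarrow> real) \<Rightarrow>
    nat set \<Rightarrow> (nat \<Rightarrow> bool) \<Rightarrow> real"
  where "grp_component G h T x = h T (restrict x (grp_union G T))"

locale additive_model = independent_groups +
  fixes S1 :: "nat set" and S2 :: "nat set set"
    and h :: "nat set \<Rightarrow> (nat \<Rightarrow> bool) \<Rightarrow> real" and f :: "(nat \<Rightarrow> bool) \<Rightarrow> real"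
  assumes S1_sub: "S1 \<subseteq> {1..M}"
    and S2_sub: "S2 \<subseteq> {J. J \<subseteq> {1..M} \<and> card J = 2}"
    and f_eq: "f x = (\<Sum>m\<in>S1. grp_component G h {m} x) + (\<Sum>J\<in>S2. grp_component G h J x)"
    and main_effect_centered: "m \<in> S1 \<Longrightarrow> measure_pmf.expectation P (grp_component G h {m}) = 0"
    and interaction_centered: "J \<in> S2 \<Longrightarrow> l \<in> J \<Longrightarrow> x \<in> set_pmf P \<Longrightarrow>
          cond_exp_coords P (G l) (grp_component G h J) x = 0"
    and component_vanishes: "J \<notin> (\<lambda>m. {m}) ` S1 \<union> S2 \<Longrightarrow> h J = (\<lambda>_. 0)"
begin

abbreviation component :: "nat set \<Rightarrow> (nat \<Rightarrow> bool) \<Rightarrow> real"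
  where "component \<equiv> grp_component G h"

lemma component_eq_0: "T \<notin> (\<lambda>m. {m}) ` S1 \<union> S2 \<Longrightarrow> component T x = 0"
  by (simp add: grp_component_def component_vanishes)

lemma expectation_component:
  assumes "T \<in> (\<lambda>m. {m}) ` S1 \<union> S2"
  shows "measure_pmf.expectation P (component T) = 0"
  using assms
proof (elim UnE imageE)
  assume T: "T \<in> S2"
  then obtain l where l: "l \<in> T" using S2_sub by fastforce
  have "measure_pmf.expectation P (component T) =
      measure_pmf.expectation P (cond_exp_coords P (G l) (component T))"
    by (rule expectation_cond_exp_coords[symmetric])
  also have "\<dots> = measure_pmf.expectation P (\<lambda>_. 0)"
    by (intro integral_cong_AE) (auto simp: AE_measure_pmf_iff interaction_centered[OF T l])
  finally show ?thesis by simp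
qed (simp add: main_effect_centered)

lemma cond_exp_component:
  assumes x: "x \<in> set_pmf P" and C: "C \<subseteq> {1..M}"
  shows "cond_exp_coords P (grp_union G C) (component T) x = (if T \<subseteq> C then component T x else 0)"
proof (cases "T \<subseteq> C")
  case True
  then show ?thesis
    unfolding grp_component_def[abs_def] by (simp add: cond_exp_coords_grp_union_subset[OF x True])
next
  case not_sub: False
  show ?thesis
  proof (cases "T \<in> (\<lambda>m. {m}) ` S1 \<union> S2")
    case False
    then show ?thesis using not_sub by (simp add: component_eq_0 cond_exp_coords_const[OF x])
  next
    case T: True
    then have TM: "T \<subseteq> {1..M}" using S1_sub S2_sub by auto
    show ?thesis
    proof (cases "C \<inter> T = {}")
      case True
      have "cond_exp_coords P (grp_union G C) (component T) x = measure_pmf.expectation P (component T)"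
        unfolding grp_component_def[abs_def]
        by (rule cond_exp_coords_indep[OF x C TM True, where \<psi>="h T"]) simp
      then show ?thesis using expectation_component[OF T] not_sub by simp
    next
      case False
      then obtain a b where a: "a \<in> T" "a \<in> C" and b: "b \<in> T" "b \<notin> C" using not_sub by blast
      then have "T \<in> S2" using T by auto
      then have "card T = 2" using S2_sub by auto
      moreover have "card {a, b} = 2" using a(2) b(2) by (cases "a = b") auto
      ultimately have T_eq: "T = {a, b}"
        using a b by (metis card_subset_eq card.infinite empty_subsetI insert_subset zero_neq_numeral)
      have "cond_exp_coords P (grp_union G C) (component T) x = cond_exp_coords P (G a) (component T) x"
        using cond_exp_coords_drop_indep_blocks[OF x _ C, of "{a}" "{b}" "h T"] a b TM
        by (simp add: grp_component_def[abs_def] T_eq insert_commute)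
      then show ?thesis using interaction_centered[OF \<open>T \<in> S2\<close> a(1) x] not_sub by simp
    qed
  qed
qed

lemma f_eq_sum_components: "f x = (\<Sum>T\<in>Pow {1..M} - {{}}. component T x)"
proof -
  have fin: "finite S1" "finite S2"
    using finite_subset[OF S1_sub] finite_subset[of S2 "Pow {1..M}"] S2_sub by auto
  have "f x = (\<Sum>T\<in>(\<lambda>m. {m}) ` S1. component T x) + (\<Sum>T\<in>S2. component T x)"
    by (simp add: f_eq sum.reindex)
  also have "\<dots> = (\<Sum>T\<in>(\<lambda>m. {m}) ` S1 \<union> S2. component T x)"
    by (rule sum.union_disjoint[symmetric]) (use fin S2_sub in auto)
  also have "\<dots> = (\<Sum>T\<in>Pow {1..M} - {{}}. component T x)"
    by (rule sum.mono_neutral_left) (use S1_sub S2_sub component_eq_0 in auto)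
  finally show ?thesis .
qed

lemma cond_exp_sum_components:
  assumes "x \<in> set_pmf P" and "C \<subseteq> {1..M}" and "finite \<T>"
  shows "cond_exp_coords P (grp_union G C) (\<lambda>y. \<Sum>T\<in>\<T>. component T y) x =
    (\<Sum>T\<in>{T\<in>\<T>. T \<subseteq> C}. component T x)"
  using assms by (simp add: cond_exp_coords_sum cond_exp_component sum.inter_filter)

lemma backfitting_step:
  assumes x: "x \<in> set_pmf P" and C: "C \<subseteq> {1..M}" and \<V>: "\<V> \<subseteq> Pow {1..M} - {{}}"
    and R: "\<And>y. y \<in> set_pmf P \<Longrightarrow> R y = (\<Sum>T\<in>\<V>. component T y)"
  shows "R x + cond_exp_coords P (grp_union G C) (\<lambda>y. f y - R y) x =
    (\<Sum>T\<in>\<V> \<union> (Pow C - {{}}). component T x)"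
proof -
  have fin: "finite \<V>" using \<V> finite_subset by blast
  have "cond_exp_coords P (grp_union G C) (\<lambda>y. f y - R y) x =
      cond_exp_coords P (grp_union G C)
        (\<lambda>y. (\<Sum>T\<in>Pow {1..M} - {{}}. component T y) - (\<Sum>T\<in>\<V>. component T y)) x"
    by (rule cond_exp_coords_cong[OF x]) (simp add: f_eq_sum_components R)
  also have "\<dots> = (\<Sum>T\<in>{T\<in>Pow {1..M} - {{}}. T \<subseteq> C}. component T x) -
      (\<Sum>T\<in>{T\<in>\<V>. T \<subseteq> C}. component T x)"
    using fin by (simp only: cond_exp_coords_diff[OF x] cond_exp_sum_components[OF x C] finite_Diff
        finite_Pow_iff finite_atLeastAtMost)
  also have "{T\<in>Pow {1..M} - {{}}. T \<subseteq> C} = Pow C - {{}}" using C by auto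
  also have "{T\<in>\<V>. T \<subseteq> C} = \<V> \<inter> (Pow C - {{}})" using \<V> by auto
  moreover have "finite (Pow C - {{}})" using finite_subset[OF C] by simp
  ultimately show ?thesis
    using R[OF x] fin by (simp add: sum_Un)
qed

lemma Rseq_eq_sum_components:
  assumes "\<And>l. l \<in> {1..s} \<Longrightarrow> Js l \<subseteq> {1..M}" and "x \<in> set_pmf P"
  shows "Rseq P G f Js s x = (\<Sum>T\<in>(\<Union>l\<in>{1..s}. Pow (Js l) - {{}}). component T x)"
  using assms
proof (induction s arbitrary: x)
  case (Suc s)
  let ?\<V> = "\<Union>l\<in>{1..s}. Pow (Js l) - {{}}"
  have "Rseq P G f Js (Suc s) x =
      Rseq P G f Js s x + cond_exp_coords P (grp_union G (Js (Suc s))) (\<lambda>y. f y - Rseq P G f Js s y) x"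
    by simp
  also have "\<dots> = (\<Sum>T\<in>?\<V> \<union> (Pow (Js (Suc s)) - {{}}). component T x)"
  proof (rule backfitting_step[OF Suc.prems(2)])
    have blocks: "\<And>l. l \<in> {1..s} \<Longrightarrow> Js l \<subseteq> {1..M}" using Suc.prems(1) by auto
    then show "?\<V> \<subseteq> Pow {1..M} - {{}}" by blast
    show "Rseq P G f Js s y = (\<Sum>T\<in>?\<V>. component T y)" if "y \<in> set_pmf P" for y
      using Suc.IH[OF blocks that] .
  qed (use Suc.prems(1) in auto)
  also have "?\<V> \<union> (Pow (Js (Suc s)) - {{}}) = (\<Union>l\<in>{1..Suc s}. Pow (Js l) - {{}})"
    by (auto simp: atLeastAtMostSuc_conv)
  finally show ?case .
qed simp

end

lemma visited_blocks_eq: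
  fixes Js :: "nat \<Rightarrow> 'a set"
  assumes card1: "\<forall>l\<in>{1..K}. card (Js l) = 1" and card2: "\<forall>l\<in>{K+1..2*K}. card (Js l) = 2"
    and "s \<le> 2*K"
  shows "(\<Union>l\<in>{1..s}. Pow (Js l) - {{}}) =
    Js ` {1..s} \<union> (\<lambda>m. {m}) ` ((\<Union>k\<in>{K+1..s}. Js k) - (\<Union>k\<in>{1..K}. Js k))"
proof
  have singleton: "\<exists>a. Js l = {a}" if "l \<in> {1..K}" for l
    using card1 that by (simp add: card_1_singleton_iff)
  show "(\<Union>l\<in>{1..s}. Pow (Js l) - {{}}) \<subseteq>
      Js ` {1..s} \<union> (\<lambda>m. {m}) ` ((\<Union>k\<in>{K+1..s}. Js k) - (\<Union>k\<in>{1..K}. Js k))"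
  proof
    fix T assume "T \<in> (\<Union>l\<in>{1..s}. Pow (Js l) - {{}})"
    then obtain l where l: "l \<in> {1..s}" and T: "T \<subseteq> Js l" "T \<noteq> {}" by blast
    show "T \<in> Js ` {1..s} \<union> (\<lambda>m. {m}) ` ((\<Union>k\<in>{K+1..s}. Js k) - (\<Union>k\<in>{1..K}. Js k))"
    proof (cases "T = Js l")
      case True
      then show ?thesis using l by blast
    next
      case False
      have "l \<notin> {1..K}"
      proof
        assume "l \<in> {1..K}"
        then obtain a where "Js l = {a}" using singleton by blast
        with T False show False by (auto dest: subset_singletonD)
      qed
      then have lK: "l \<in> {K+1..s}" and "card (Js l) = 2" using l card2 \<open>s \<le> 2*K\<close> by auto
      then have "finite (Js l)" by (intro card_ge_0_finite) simp
      then have "card T < card (Js l)" using T False by (intro psubset_card_mono) auto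
      moreover have "card T \<noteq> 0" using T \<open>finite (Js l)\<close> by (simp add: finite_subset)
      ultimately have "card T = 1" using \<open>card (Js l) = 2\<close> by linarith
      then obtain m where m: "T = {m}" by (rule card_1_singletonE)
      show ?thesis
      proof (cases "m \<in> (\<Union>k\<in>{1..K}. Js k)")
        case True
        then obtain k where k: "k \<in> {1..K}" "m \<in> Js k" by blast
        then have "Js k = T" using singleton m by fastforce
        then show ?thesis using k lK by auto
      next
        case False
        then show ?thesis using m T lK by blast
      qed
    qed
  qed
  have "Js l \<noteq> {}" if "l \<in> {1..s}" for l
  proof (cases "l \<le> K")
    case True
    then show ?thesis using singleton that by fastforce
  next
    case False
    then have "card (Js l) = 2" using card2 that \<open>s \<le> 2*K\<close> by auto
    then show ?thesis by auto
  qed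
  then show "Js ` {1..s} \<union> (\<lambda>m. {m}) ` ((\<Union>k\<in>{K+1..s}. Js k) - (\<Union>k\<in>{1..K}. Js k)) \<subseteq>
      (\<Union>l\<in>{1..s}. Pow (Js l) - {{}})"
    by fastforce
qed

lemma sum_visited_blocks:
  fixes Js :: "nat \<Rightarrow> 'a set" and g :: "'a set \<Rightarrow> 'b::comm_monoid_add"
  assumes inj: "inj_on Js {1..2*K}"
    and card1: "\<forall>l\<in>{1..K}. card (Js l) = 1" and card2: "\<forall>l\<in>{K+1..2*K}. card (Js l) = 2"
    and s: "s \<le> 2*K"
  shows "(\<Sum>T\<in>(\<Union>l\<in>{1..s}. Pow (Js l) - {{}}). g T) =
    (\<Sum>l=1..s. g (Js l)) + (\<Sum>m\<in>(\<Union>k\<in>{K+1..s}. Js k) - (\<Union>k\<in>{1..K}. Js k). g {m})"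
proof -
  let ?new = "(\<Union>k\<in>{K+1..s}. Js k) - (\<Union>k\<in>{1..K}. Js k)"
  have "finite (Js k)" if "k \<in> {K+1..s}" for k
    using that card2 s by (intro card_ge_0_finite) auto
  then have fin: "finite ?new" by blast
  have disj: "Js ` {1..s} \<inter> (\<lambda>m. {m}) ` ?new = {}"
  proof (rule ccontr)
    assume "Js ` {1..s} \<inter> (\<lambda>m. {m}) ` ?new \<noteq> {}"
    then obtain l m where l: "l \<in> {1..s}" and m: "m \<in> ?new" and "Js l = {m}" by blast
    then have "l \<notin> {1..K}" by blast
    then have "card (Js l) = 2" using l s card2 by auto
    with \<open>Js l = {m}\<close> show False by simp
  qed
  have "(\<Sum>T\<in>(\<Union>l\<in>{1..s}. Pow (Js l) - {{}}). g T) = sum g (Js ` {1..s}) + sum g ((\<lambda>m. {m}) ` ?new)"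
    unfolding visited_blocks_eq[OF card1 card2 s] using fin disj by (intro sum.union_disjoint) auto
  also have "sum g (Js ` {1..s}) = (\<Sum>l=1..s. g (Js l))"
    using s by (intro sum.reindex_cong[OF inj_on_subset[OF inj]]) auto
  also have "sum g ((\<lambda>m. {m}) ` ?new) = (\<Sum>m\<in>?new. g {m})"
    by (simp add: sum.reindex)
  finally show ?thesis .
qed

theorem mainTheorem11:
  fixes p M K :: nat
    and G :: "nat \<Rightarrow> nat set"
    and P :: "(nat \<Rightarrow> bool) pmf"
    and S1 :: "nat set" and S2 :: "nat set set"
    and h :: "nat set \<Rightarrow> (nat \<Rightarrow> bool) \<Rightarrow> real"
    and f :: "(nat \<Rightarrow> bool) \<Rightarrow> real"
    and Js :: "nat \<Rightarrow> nat set"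
  assumes support: "set_pmf P \<subseteq> {x. \<forall>j. x j \<longrightarrow> j \<in> {1..p}}"
    and grp_nonempty: "\<forall>m\<in>{1..M}. G m \<noteq> {}"
    and grp_disj: "disjoint_family_on G {1..M}"
    and grp_cover: "(\<Union>m\<in>{1..M}. G m) = {1..p}"
    and indep: "prob_space.indep_vars (measure_pmf P) (\<lambda>m. count_space UNIV)
                  (\<lambda>m x. restrict x (G m)) {1..M}"
    and S1_sub: "S1 \<subseteq> {1..M}"
    and S2_sub: "S2 \<subseteq> {J. J \<subseteq> {1..M} \<and> card J = 2}"
    and f_def: "\<forall>x. f x = (\<Sum>m\<in>S1. h {m} (restrict x (grp_union G {m})))
                         + (\<Sum>J\<in>S2. h J (restrict x (grp_union G J)))"
    and h_main_centered: "\<forall>m\<in>S1.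
          measure_pmf.expectation P (\<lambda>x. h {m} (restrict x (grp_union G {m}))) = 0"
    and h_int_centered: "\<forall>J\<in>S2. \<forall>l\<in>J. \<forall>x\<in>set_pmf P.
          cond_exp_coords P (G l) (\<lambda>y. h J (restrict y (grp_union G J))) x = 0"
    and h_zero: "\<forall>J. J \<notin> ((\<lambda>m. {m}) ` S1) \<union> S2 \<longrightarrow> h J = (\<lambda>_. 0)"
    and K_pos: "K \<ge> 1"
    and Js_distinct: "inj_on Js {1..2*K}"
    and Js_sub: "\<forall>l\<in>{1..2*K}. Js l \<subseteq> {1..M}"
    and Js_card1: "\<forall>l\<in>{1..K}. card (Js l) = 1"
    and Js_card2: "\<forall>l\<in>{K+1..2*K}. card (Js l) = 2"
  shows "\<forall>s. 0 < s \<and> s \<le> 2*K \<longrightarrow> (\<forall>x\<in>set_pmf P.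
           Rseq P G f Js s x =
             (\<Sum>l=1..s. h (Js l) (restrict x (grp_union G (Js l))))
           + (\<Sum>m\<in>(\<Union>k\<in>{K+1..s}. Js k) - (\<Union>k\<in>{1..K}. Js k).
                 h {m} (restrict x (grp_union G {m}))))"
proof (intro allI impI ballI)
  fix s x assume s: "0 < s \<and> s \<le> 2*K" and x: "x \<in> set_pmf P"
  have "finite (set_pmf P)" by (rule finite_set_pmf_bounded_support[OF support]) simp
  then interpret additive_model P G M S1 S2 h f
    using indep S1_sub S2_sub f_def h_main_centered h_int_centered h_zero
    by unfold_locales (simp_all add: grp_component_def[abs_def])
  have "Rseq P G f Js s x = (\<Sum>T\<in>(\<Union>l\<in>{1..s}. Pow (Js l) - {{}}). component T x)"
    using Js_sub s by (intro Rseq_eq_sum_components[OF _ x]) auto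
  also have "\<dots> = (\<Sum>l=1..s. component (Js l) x) +
      (\<Sum>m\<in>(\<Union>k\<in>{K+1..s}. Js k) - (\<Union>k\<in>{1..K}. Js k). component {m} x)"
    using s by (intro sum_visited_blocks[OF Js_distinct Js_card1 Js_card2]) simp
  finally show "Rseq P G f Js s x =
      (\<Sum>l=1..s. h (Js l) (restrict x (grp_union G (Js l))))
    + (\<Sum>m\<in>(\<Union>k\<in>{K+1..s}. Js k) - (\<Union>k\<in>{1..K}. Js k). h {m} (restrict x (grp_union G {m})))"
    by (simp add: grp_component_def)
qed

end
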